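(* Fix $m\ge1$ and $n\ge0$. For every formula $\phi\in\mathcal{L}^m$ and every label $x$: if $\phi$ is valid (true at every world of every $\mathsf{Ldm}_{n}^{m}$-model), then the sequent $x:\phi$ is derivable in the calculus $\mathsf{Ldm}_{n}^{m}\mathsf{L}$ (which contains no cut rule).
   Context: Language. $Ag=\{1,\dots,m\}$, $Var$ a countable set of propositional variables; formulas of $\mathcal{L}^m$: $\phi ::= p \mid \overline{p} \mid (\phi\wedge\phi) \mid (\phi\vee\phi) \mid \Box\phi \mid \Diamond\phi \mid [i]\phi \mid \langle i\rangle\phi$. Models. An $\mathsf{Ldm}_{n}^{m}$-frame is $(W,\{\mathcal{R}_i\}_{i\in Ag})$ with $W\neq\emptyset$ and: (C1) each $\mathcal{R}_i\subseteq W\times W$ is an equivalence relation; (C2) for all $u_1,\dots,u_m\in W$, $\bigcap_{i\in Ag}\mathcal{R}_i(u_i)\neq\emptyset$, where $\mathcal{R}_i(w)=\{v:(w,v)\in\mathcal{R}_i\}$; (C3) only if $n>0$: for each $i\in Ag$ and all $w_0,\dots,w_n\in W$ there are $0\le k<j\le n$ with $(w_k,w_j)\in\mathcal{R}_i$. A model adds a valuation $V:Var\to\mathcal{P}(W)$. Satisfaction: $w\Vdash p$ iff $w\in V(p)$; $w\Vdash\overline{p}$ iff $w\notin V(p)$; $\wedge,\vee$ as usual; $w\Vdash\Box\phi$ iff $u\Vdash\phi$ for all $u\in W$; $w\Vdash\Diamond\phi$ iff $u\Vdash\phi$ for some $u\in W$; $w\Vdash[i]\phi$ iff $u\Vdash\phi$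 for all $u\in\mathcal{R}_i(w)$; $w\Vdash\langle i\rangle\phi$ iff $u\Vdash\phi$ for some $u\in\mathcal{R}_i(w)$. Labelled sequents $\mathcal{R},\Gamma$: $\mathcal{R}$ a multiset of relational atoms $\mathcal{R}_ixy$, $\Gamma$ a multiset of labelled formulas $x:\phi$. Derivations are finite trees whose leaves are $(\mathsf{id})$ instances. Rules of $\mathsf{Ldm}_{n}^{m}\mathsf{L}$ (premise(s) / conclusion): $(\mathsf{id})$: / $\mathcal{R}, w:p, w:\overline{p},\Gamma$. $(\wedge)$: $\mathcal{R}, w:\phi\wedge\psi, w:\phi,\Gamma$ and $\mathcal{R}, w:\phi\wedge\psi, w:\psi,\Gamma$ / $\mathcal{R}, w:\phi\wedge\psi,\Gamma$. $(\vee)$: $\mathcal{R}, w:\phi\vee\psi, w:\phi, w:\psi,\Gamma$ / $\mathcal{R}, w:\phi\vee\psi,\Gamma$. $(\Box)$: $\mathcal{R}, w:\Box\phi, v:\phi,\Gamma$ / $\mathcal{R}, w:\Box\phi,\Gamma$ ($v$ fresh). $(\Diamond)$: $\mathcal{R}, w:\Diamond\phi, u:\phi,\Gamma$ / $\mathcal{R}, w:\Diamond\phi,\Gamma$. $(\mathsf{IOA})$: $\mathcal{R},\mathcal{R}_1u_1v,\dots,\mathcal{R}_mu_mv,\Gamma$ / $\mathcal{R},\Gamma$ ($v$ fresh). $([i])$: $\mathcal{R},\mathcal{R}_iwv, w:[i]\phi, v:\phi,\Gamma$ / $\mathcal{R}, w:[i]\phi,\Gamma$ ($v$ fresh). $(\mathsf{Pr}_i)$: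 $\mathcal{R}, w:\langle i\rangle\phi, u:\phi,\Gamma$ / $\mathcal{R}, w:\langle i\rangle\phi,\Gamma$, applicable only if $w=u$ or there are labels $w=z_0,\dots,z_k=u$ ($k\ge1$) with $\mathcal{R}_iz_lz_{l+1}\in\mathcal{R}$ or $\mathcal{R}_iz_{l+1}z_l\in\mathcal{R}$ for each $l<k$. $(\mathsf{APC}^i_n)$ (only if $n>0$): premises $\mathcal{R},\mathcal{R}_iw_kw_j,\Gamma$ for all $0\le k\le n-1$, $k+1\le j\le n$ / $\mathcal{R},\Gamma$. "Fresh" means not occurring in the conclusion. One copy of $([i])$, $(\mathsf{Pr}_i)$, $(\mathsf{APC}^i_n)$ for each $i\in Ag$. *)

theory Defs
  imports Main "HOL-Library.Multiset"
begin

datatype fm =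
    Pos nat
  | Neg nat
  | Conj fm fm
  | Disj fm fm
  | Box fm
  | Dia fm
  | Stit nat fm
  | DStit nat fm

fun agents :: "fm \<Rightarrow> nat set" where
  "agents (Pos p) = {}"
| "agents (Neg p) = {}"
| "agents (Conj a b) = agents a \<union> agents b"
| "agents (Disj a b) = agents a \<union> agents b"
| "agents (Box a) = agents a"
| "agents (Dia a) = agents a"
| "agents (Stit i a) = insert i (agents a)"
| "agents (DStit i a) = insert i (agents a)"

definition in_lang :: "nat \<Rightarrow> fm \<Rightarrow> bool" where
  "in_lang m \<phi> \<longleftrightarrow> agents \<phi> \<subseteq> {1..m}"

definition ldm_frame :: "nat \<Rightarrow> nat \<Rightarrow> 'w set \<Rightarrow> (nat \<Rightarrow> ('w \<times> 'w) set) \<Rightarrow> bool" where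
  "ldm_frame m n W R \<longleftrightarrow>
     W \<noteq> {} \<and>
     (\<forall>i\<in>{1..m}. equiv W (R i)) \<and>
     (\<forall>u. (\<forall>i\<in>{1..m}. u i \<in> W) \<longrightarrow> (\<exists>v\<in>W. \<forall>i\<in>{1..m}. (u i, v) \<in> R i)) \<and>
     (n > 0 \<longrightarrow> (\<forall>i\<in>{1..m}. \<forall>ws. (\<forall>k\<le>n. ws k \<in> W) \<longrightarrow>
          (\<exists>k j. k < j \<and> j \<le> n \<and> (ws k, ws j) \<in> R i)))"

fun sat :: "'w set \<Rightarrow> (nat \<Rightarrow> ('w \<times> 'w) set) \<Rightarrow> (nat \<Rightarrow> 'w set) \<Rightarrow> 'w \<Rightarrow> fm \<Rightarrow> bool" where
  "sat W R V w (Pos p) = (w \<in> V p)"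
| "sat W R V w (Neg p) = (w \<notin> V p)"
| "sat W R V w (Conj a b) = (sat W R V w a \<and> sat W R V w b)"
| "sat W R V w (Disj a b) = (sat W R V w a \<or> sat W R V w b)"
| "sat W R V w (Box a) = (\<forall>u\<in>W. sat W R V u a)"
| "sat W R V w (Dia a) = (\<exists>u\<in>W. sat W R V u a)"
| "sat W R V w (Stit i a) = (\<forall>u. (w, u) \<in> R i \<longrightarrow> sat W R V u a)"
| "sat W R V w (DStit i a) = (\<exists>u. (w, u) \<in> R i \<and> sat W R V u a)"

text \<open>Validity: truth at every world of every Ldm^m_n-model. HOL cannot quantify
over all types inside a definition; worlds are taken from the countable type nat.\<close>

definition valid :: "nat \<Rightarrow> nat \<Rightarrow> fm \<Rightarrow> bool" where
  "valid m n \<phi> \<longleftrightarrow>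
     (\<forall>(W :: nat set) R (V :: nat \<Rightarrow> nat set). ldm_frame m n W R \<longrightarrow>
        (\<forall>w\<in>W. sat W R V w \<phi>))"

text \<open>Labels are natural numbers. A relational atom R_i x y is the triple (i, x, y);
a labelled formula x:phi is the pair (x, phi).\<close>

type_synonym ratom = "nat \<times> nat \<times> nat"
type_synonym lfm = "nat \<times> fm"

definition labels :: "ratom multiset \<Rightarrow> lfm multiset \<Rightarrow> nat set" where
  "labels Rs G = (\<Union>(i,x,y)\<in>set_mset Rs. {x, y}) \<union> fst ` set_mset G"

definition rel_conn :: "nat \<Rightarrow> ratom multiset \<Rightarrow> (nat \<times> nat) set" where
  "rel_conn i Rs = {(x, y). (i, x, y) \<in># Rs \<or> (i, y, x) \<in># Rs}"

inductive derivable :: "nat \<Rightarrow> nat \<Rightarrow> ratom multiset \<Rightarrow> lfm multiset \<Rightarrow> bool"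
  for m n :: nat where
  id: "derivable m n Rs ({#(w, Pos p), (w, Neg p)#} + G)"
| conj: "derivable m n Rs ({#(w, Conj a b), (w, a)#} + G) \<Longrightarrow>
         derivable m n Rs ({#(w, Conj a b), (w, b)#} + G) \<Longrightarrow>
         derivable m n Rs (add_mset (w, Conj a b) G)"
| disj: "derivable m n Rs ({#(w, Disj a b), (w, a), (w, b)#} + G) \<Longrightarrow>
         derivable m n Rs (add_mset (w, Disj a b) G)"
| box: "v \<notin> labels Rs (add_mset (w, Box a) G) \<Longrightarrow>
        derivable m n Rs ({#(w, Box a), (v, a)#} + G) \<Longrightarrow>
        derivable m n Rs (add_mset (w, Box a) G)"
| dia: "derivable m n Rs ({#(w, Dia a), (u, a)#} + G) \<Longrightarrow>
        derivable m n Rs (add_mset (w, Dia a) G)"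
| ioa: "v \<notin> labels Rs G \<Longrightarrow>
        derivable m n (Rs + mset (map (\<lambda>i. (i, u i, v)) [1..<Suc m])) G \<Longrightarrow>
        derivable m n Rs G"
| stit: "i \<in> {1..m} \<Longrightarrow> v \<notin> labels Rs (add_mset (w, Stit i a) G) \<Longrightarrow>
         derivable m n (add_mset (i, w, v) Rs) ({#(w, Stit i a), (v, a)#} + G) \<Longrightarrow>
         derivable m n Rs (add_mset (w, Stit i a) G)"
| pr: "i \<in> {1..m} \<Longrightarrow> (w, u) \<in> (rel_conn i Rs)\<^sup>* \<Longrightarrow>
       derivable m n Rs ({#(w, DStit i a), (u, a)#} + G) \<Longrightarrow>
       derivable m n Rs (add_mset (w, DStit i a) G)"
| apc: "n > 0 \<Longrightarrow> i \<in> {1..m} \<Longrightarrow>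
        (\<And>k j. k < j \<Longrightarrow> j \<le> n \<Longrightarrow> derivable m n (add_mset (i, ws k, ws j) Rs) G) \<Longrightarrow>
        derivable m n Rs G"

end

theory Submission
  imports Defs "HOL-Library.Countable"
begin

text \<open>Completeness by a failed proof search. Read bottom-up, every rule of the calculus turns an
underivable sequent into an underivable premise that extends it. Scheduling all rule applications
so that each recurs infinitely often, the search started from an underivable sequent \<open>x:\<phi>\<close>
builds an increasing chain of underivable sequents whose union is a Hintikka set: it contains no
clash \<open>w:Pos p\<close>, \<open>w:Neg p\<close> and is closed under the rules. Taking all labels as worlds, the
equivalence closure of the relational atoms of agent \<open>i\<close> as \<open>R i\<close>, and making \<open>p\<close> true
exactly where \<open>Neg p\<close> occurs yields an \<open>Ldm\<^sup>m\<^sub>n\<close>-model falsifying every formula of the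
Hintikka set, so \<open>\<phi>\<close> is not valid.\<close>

section \<open>Hintikka sets and their countermodels\<close>

definition links :: "nat \<Rightarrow> ratom set \<Rightarrow> (nat \<times> nat) set" where
  "links i A = {(x, y). (i, x, y) \<in> A \<or> (i, y, x) \<in> A}"

lemma sym_links: "sym (links i A)"
  by (auto simp: links_def sym_def)

locale hintikka =
  fixes m n :: nat and A :: "ratom set" and H :: "lfm set"
  assumes consistent: "(w, Pos p) \<in> H \<Longrightarrow> (w, Neg p) \<notin> H"
    and conj: "(w, Conj a b) \<in> H \<Longrightarrow> (w, a) \<in> H \<or> (w, b) \<in> H"
    and disj: "(w, Disj a b) \<in> H \<Longrightarrow> (w, a) \<in> H \<and> (w, b) \<in> H"
    and box: "(w, Box a) \<in> H \<Longrightarrow> \<exists>v. (v, a) \<in> H"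
    and dia: "(w, Dia a) \<in> H \<Longrightarrow> (u, a) \<in> H"
    and stit: "(w, Stit i a) \<in> H \<Longrightarrow> i \<in> {1..m} \<Longrightarrow> \<exists>v. (i, w, v) \<in> A \<and> (v, a) \<in> H"
    and pr: "(w, DStit i a) \<in> H \<Longrightarrow> i \<in> {1..m} \<Longrightarrow> (w, u) \<in> (links i A)\<^sup>* \<Longrightarrow> (u, a) \<in> H"
    and ioa: "\<exists>v. \<forall>i\<in>{1..m}. (i, us i, v) \<in> A"
    and apc: "0 < n \<Longrightarrow> i \<in> {1..m} \<Longrightarrow> \<exists>k j. k < j \<and> j \<le> n \<and> (i, ws k, ws j) \<in> A"
begin

definition R :: "nat \<Rightarrow> (nat \<times> nat) set" where
  "R i = (links i A)\<^sup>*"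

definition V :: "nat \<Rightarrow> nat set" where
  "V p = {w. (w, Neg p) \<in> H}"

lemma ldm_frame_countermodel: "ldm_frame m n UNIV R"
  unfolding ldm_frame_def
proof (intro conjI ballI allI impI)
  show "equiv UNIV (R i)" for i
    unfolding R_def by (auto intro!: equivI refl_rtrancl sym_rtrancl sym_links trans_rtrancl)
  show "\<exists>v\<in>UNIV. \<forall>i\<in>{1..m}. (u i, v) \<in> R i" for u
    using ioa[of u] by (auto simp: R_def links_def)
  show "\<exists>k j. k < j \<and> j \<le> n \<and> (ws k, ws j) \<in> R i" if "0 < n" "i \<in> {1..m}" for i ws
    using apc[OF that, of ws] by (auto simp: R_def links_def)
qed simp

lemma countermodel_falsifies: "agents \<psi> \<subseteq> {1..m} \<Longrightarrow> (w, \<psi>) \<in> H \<Longrightarrow> \<not> sat UNIV R V w \<psi>"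
proof (induction \<psi> arbitrary: w)
  case (Pos p)
  then show ?case using consistent by (simp add: V_def)
next
  case (Neg p)
  then show ?case by (simp add: V_def)
next
  case (Conj a b)
  then show ?case using conj[of w a b] by auto
next
  case (Disj a b)
  then show ?case using disj[of w a b] by auto
next
  case (Box a)
  then obtain v where "(v, a) \<in> H" using box by blast
  then show ?case using Box by auto
next
  case (Dia a)
  then show ?case using dia[of w a] by auto
next
  case (Stit i a)
  then obtain v where "(i, w, v) \<in> A" "(v, a) \<in> H" using stit[of w i a] by auto
  then show ?case using Stit by (auto simp: R_def links_def)
next
  case (DStit i a)
  then show ?case using pr[of w i a] by (auto simp: R_def)
qed

end

lemma derivable_id_mem:
  assumes "(w, Pos p) \<in># G" and "(w, Neg p) \<in># G"
  shows "derivable m n Rs G"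
proof -
  obtain G1 where G1: "G = add_mset (w, Pos p) G1" using assms(1) by (metis multi_member_split)
  then have "(w, Neg p) \<in># G1" using assms(2) by auto
  then obtain G2 where "G1 = add_mset (w, Neg p) G2" by (metis multi_member_split)
  then show ?thesis using G1 derivable.id[of m n Rs w p G2] by simp
qed

lemma derivable_conj_mem:
  "(w, Conj a b) \<in># G \<Longrightarrow> derivable m n Rs (add_mset (w, a) G) \<Longrightarrow>
    derivable m n Rs (add_mset (w, b) G) \<Longrightarrow> derivable m n Rs G"
  by (auto dest!: multi_member_split intro: derivable.conj simp: add_mset_commute)

lemma derivable_disj_mem:
  "(w, Disj a b) \<in># G \<Longrightarrow> derivable m n Rs (add_mset (w, a) (add_mset (w, b) G)) \<Longrightarrow>
    derivable m n Rs G"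
  by (auto dest!: multi_member_split intro: derivable.disj simp: add_mset_commute)

lemma derivable_box_mem:
  "(w, Box a) \<in># G \<Longrightarrow> v \<notin> labels Rs G \<Longrightarrow> derivable m n Rs (add_mset (v, a) G) \<Longrightarrow>
    derivable m n Rs G"
  by (auto dest!: multi_member_split intro: derivable.box simp: add_mset_commute)

lemma derivable_dia_mem:
  "(w, Dia a) \<in># G \<Longrightarrow> derivable m n Rs (add_mset (u, a) G) \<Longrightarrow> derivable m n Rs G"
  by (auto dest!: multi_member_split intro: derivable.dia[where u = u] simp: add_mset_commute)

lemma derivable_stit_mem:
  "(w, Stit i a) \<in># G \<Longrightarrow> i \<in> {1..m} \<Longrightarrow> v \<notin> labels Rs G \<Longrightarrow>
    derivable m n (add_mset (i, w, v) Rs) (add_mset (v, a) G) \<Longrightarrow> derivable m n Rs G"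
  by (auto dest!: multi_member_split intro: derivable.stit simp: add_mset_commute)

lemma derivable_pr_mem:
  "(w, DStit i a) \<in># G \<Longrightarrow> i \<in> {1..m} \<Longrightarrow> (w, u) \<in> (rel_conn i Rs)\<^sup>* \<Longrightarrow>
    derivable m n Rs (add_mset (u, a) G) \<Longrightarrow> derivable m n Rs G"
  by (auto dest!: multi_member_split intro: derivable.pr simp: add_mset_commute)

lemma ex_fresh_label: "\<exists>v. v \<notin> labels Rs G"
  by (rule ex_new_if_finite) (auto simp: labels_def)

instance fm :: countable by countable_datatype

text \<open>The rule applications to be scheduled: \<open>Reduce w \<phi> u\<close> applies the rule for \<open>w:\<phi>\<close>,
with \<open>u\<close> the label chosen by \<open>dia\<close> and \<open>pr\<close>; the labels of an \<open>ioa\<close> or \<open>apc\<close> instance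
are given as a list indexed from 0, so that only countably many tasks exist.\<close>

datatype task = Reduce nat fm nat | Ioa "nat list" | Apc nat "nat list"

instance task :: countable by countable_datatype

fun reduced :: "nat \<Rightarrow> nat \<Rightarrow> fm \<Rightarrow> nat \<Rightarrow> ratom multiset \<Rightarrow> lfm multiset \<Rightarrow> bool" where
  "reduced m w (Pos p) u Rs G = True"
| "reduced m w (Neg p) u Rs G = True"
| "reduced m w (Conj a b) u Rs G = ((w, a) \<in># G \<or> (w, b) \<in># G)"
| "reduced m w (Disj a b) u Rs G = ((w, a) \<in># G \<and> (w, b) \<in># G)"
| "reduced m w (Box a) u Rs G = (\<exists>v. (v, a) \<in># G)"
| "reduced m w (Dia a) u Rs G = ((u, a) \<in># G)"
| "reduced m w (Stit i a) u Rs G = (i \<in> {1..m} \<longrightarrow> (\<exists>v. (i, w, v) \<in># Rs \<and> (v, a) \<in># G))"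
| "reduced m w (DStit i a) u Rs G = (i \<in> {1..m} \<and> (w, u) \<in> (rel_conn i Rs)\<^sup>* \<longrightarrow> (u, a) \<in># G)"

fun fulfils :: "nat \<Rightarrow> nat \<Rightarrow> task \<Rightarrow> ratom multiset \<Rightarrow> lfm multiset \<Rightarrow> bool" where
  "fulfils m n (Reduce w \<phi> u) Rs G = ((w, \<phi>) \<in># G \<longrightarrow> reduced m w \<phi> u Rs G)"
| "fulfils m n (Ioa us) Rs G = (\<exists>v. \<forall>i\<in>{1..m}. (i, us ! i, v) \<in># Rs)"
| "fulfils m n (Apc i ws) Rs G =
    (0 < n \<and> i \<in> {1..m} \<longrightarrow> (\<exists>k j. k < j \<and> j \<le> n \<and> (i, ws ! k, ws ! j) \<in># Rs))"

lemma underivable_reduction: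
  assumes "(w, \<phi>) \<in># G" and "\<not> derivable m n Rs G"
  shows "\<exists>Rs' G'. Rs \<subseteq># Rs' \<and> G \<subseteq># G' \<and> \<not> derivable m n Rs' G' \<and> reduced m w \<phi> u Rs' G'"
proof -
  have extend: "?thesis" if "\<not> derivable m n Rs' G'" "reduced m w \<phi> u Rs' G'"
    "Rs \<subseteq># Rs'" "G \<subseteq># G'" for Rs' G'
    using that by blast
  show ?thesis
  proof (cases \<phi>)
    case (Conj a b)
    then consider "\<not> derivable m n Rs (add_mset (w, a) G)" | "\<not> derivable m n Rs (add_mset (w, b) G)"
      using assms derivable_conj_mem by blast
    then show ?thesis
      by cases (erule extend; simp add: Conj)+
  next
    case (Disj a b)
    then have "\<not> derivable m n Rs (add_mset (w, a) (add_mset (w, b) G))"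
      using assms derivable_disj_mem by blast
    then show ?thesis by (rule extend) (auto simp: Disj intro: subset_mset.order_trans)
  next
    case (Box a)
    obtain v where "v \<notin> labels Rs G" using ex_fresh_label by blast
    then have "\<not> derivable m n Rs (add_mset (v, a) G)" using assms Box derivable_box_mem by blast
    then show ?thesis by (rule extend) (auto simp: Box)
  next
    case (Dia a)
    then have "\<not> derivable m n Rs (add_mset (u, a) G)" using assms derivable_dia_mem by blast
    then show ?thesis by (rule extend) (simp_all add: Dia)
  next
    case (Stit i a)
    show ?thesis
    proof (cases "i \<in> {1..m}")
      case True
      obtain v where "v \<notin> labels Rs G" using ex_fresh_label by blast
      then have "\<not> derivable m n (add_mset (i, w, v) Rs) (add_mset (v, a) G)"
        using assms Stit True derivable_stit_mem by blast
      then show ?thesis by (rule extend) (auto simp: Stit)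
    qed (rule extend[of Rs G], use assms Stit in auto)
  next
    case (DStit i a)
    show ?thesis
    proof (cases "i \<in> {1..m} \<and> (w, u) \<in> (rel_conn i Rs)\<^sup>*")
      case True
      then have "\<not> derivable m n Rs (add_mset (u, a) G)" using assms DStit derivable_pr_mem by blast
      then show ?thesis by (rule extend) (simp_all add: DStit True)
    qed (rule extend[of Rs G], use assms DStit in auto)
  qed (rule extend[of Rs G], use assms in auto)+
qed

lemma underivable_ioa:
  assumes "\<not> derivable m n Rs G"
  shows "\<exists>Rs'. Rs \<subseteq># Rs' \<and> \<not> derivable m n Rs' G \<and> (\<exists>v. \<forall>i\<in>{1..m}. (i, u i, v) \<in># Rs')"
proof -
  obtain v where "v \<notin> labels Rs G" using ex_fresh_label by blast
  let ?Rs' = "Rs + mset (map (\<lambda>i. (i, u i, v)) [1..<Suc m])"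
  have "\<not> derivable m n ?Rs' G" using assms \<open>v \<notin> labels Rs G\<close> derivable.ioa by blast
  moreover have "(i, u i, v) \<in># ?Rs'" if "i \<in> {1..m}" for i
    using that by (simp del: upt_Suc)
  moreover have "Rs \<subseteq># ?Rs'" by simp
  ultimately show ?thesis by blast
qed

lemma underivable_fulfils:
  assumes "\<not> derivable m n Rs G"
  shows "\<exists>Rs' G'. Rs \<subseteq># Rs' \<and> G \<subseteq># G' \<and> \<not> derivable m n Rs' G' \<and> fulfils m n t Rs' G'"
proof (cases t)
  case (Reduce w \<phi> u)
  then show ?thesis
    using assms underivable_reduction[OF _ assms, of w \<phi> u] by (cases "(w, \<phi>) \<in># G") auto
next
  case (Ioa us)
  then show ?thesis using underivable_ioa[OF assms, of "\<lambda>i. us ! i"] by auto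
next
  case (Apc i ws)
  show ?thesis
  proof (cases "0 < n \<and> i \<in> {1..m}")
    case True
    then obtain k j where "k < j" "j \<le> n" "\<not> derivable m n (add_mset (i, ws ! k, ws ! j) Rs) G"
      using assms derivable.apc[of n i m "\<lambda>k. ws ! k" Rs G] by blast
    then show ?thesis using Apc by (intro exI[of _ "add_mset (i, ws ! k, ws ! j) Rs"]) auto
  qed (use assms Apc in auto)
qed

section \<open>Fair proof search\<close>

type_synonym sequent = "ratom multiset \<times> lfm multiset"

definition search_step :: "nat \<Rightarrow> nat \<Rightarrow> task \<Rightarrow> sequent \<Rightarrow> sequent \<Rightarrow> bool" where
  "search_step m n t S S' \<longleftrightarrow> fst S \<subseteq># fst S' \<and> snd S \<subseteq># snd S' \<and>
     \<not> derivable m n (fst S') (snd S') \<and> fulfils m n t (fst S') (snd S')"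

definition task_at :: "nat \<Rightarrow> task" where
  "task_at k = from_nat (fst (prod_decode k))"

lemma task_at_infinitely_often: "\<exists>k\<ge>k0. task_at k = t"
  by (rule exI[of _ "prod_encode (to_nat t, k0)"]) (simp add: task_at_def le_prod_encode_2)

primrec search :: "nat \<Rightarrow> nat \<Rightarrow> sequent \<Rightarrow> nat \<Rightarrow> sequent" where
  "search m n S 0 = S"
| "search m n S (Suc k) = (SOME S'. search_step m n (task_at k) (search m n S k) S')"

lemma ex_search_step:
  assumes "\<not> derivable m n (fst S) (snd S)"
  shows "\<exists>S'. search_step m n t S S'"
proof -
  obtain Rs' G' where "fst S \<subseteq># Rs'" "snd S \<subseteq># G'" "\<not> derivable m n Rs' G'" "fulfils m n t Rs' G'"
    using underivable_fulfils[OF assms] by blast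
  then show ?thesis by (intro exI[of _ "(Rs', G')"]) (simp add: search_step_def)
qed

lemma rtrancl_UN_mono:
  fixes r :: "nat \<Rightarrow> 'a rel"
  assumes "mono r" and "(x, y) \<in> (\<Union>k. r k)\<^sup>*"
  shows "\<exists>k0. \<forall>k\<ge>k0. (x, y) \<in> (r k)\<^sup>*"
  using assms(2)
proof (induction rule: rtrancl_induct)
  case (step y z)
  obtain k0 where "\<forall>k\<ge>k0. (x, y) \<in> (r k)\<^sup>*" using step.IH by blast
  moreover obtain k1 where "(y, z) \<in> r k1" using step.hyps(2) by blast
  ultimately have "(x, z) \<in> (r k)\<^sup>*" if "k \<ge> max k0 k1" for k
    using that monoD[OF assms(1), of k1 k] by (auto intro: rtrancl_into_rtrancl)
  then show ?case by blast
qed auto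

locale failed_search =
  fixes m n :: nat and S0 :: sequent
  assumes root_underivable: "\<not> derivable m n (fst S0) (snd S0)"
begin

abbreviation S :: "nat \<Rightarrow> sequent" where
  "S \<equiv> search m n S0"

lemma stage_underivable: "\<not> derivable m n (fst (S k)) (snd (S k))"
  and search_step_stage: "search_step m n (task_at k) (S k) (S (Suc k))"
proof -
  have step: "search_step m n (task_at k) (S k) (S (Suc k))"
    if "\<not> derivable m n (fst (S k)) (snd (S k))" for k
    using someI_ex[OF ex_search_step[OF that]] by simp
  show "\<not> derivable m n (fst (S k)) (snd (S k))"
  proof (induction k)
    case 0
    show ?case using root_underivable by simp
  next
    case (Suc k)
    then show ?case using step[OF Suc] unfolding search_step_def by blast
  qed
  then show "search_step m n (task_at k) (S k) (S (Suc k))" by (rule step)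
qed

lemma stage_mono:
  assumes "k \<le> l"
  shows "fst (S k) \<subseteq># fst (S l)" and "snd (S k) \<subseteq># snd (S l)"
  using search_step_stage
  by (auto simp only: search_step_def intro: subset_mset.lift_Suc_mono_le[OF _ assms])

definition limit_rels :: "ratom set" where
  "limit_rels = (\<Union>k. set_mset (fst (S k)))"

definition limit_fms :: "lfm set" where
  "limit_fms = (\<Union>k. set_mset (snd (S k)))"

lemma limit_fms_eventually: "x \<in> limit_fms \<Longrightarrow> \<exists>k0. \<forall>k\<ge>k0. x \<in># snd (S k)"
  unfolding limit_fms_def using stage_mono(2) by (blast dest: set_mset_mono)

lemma fulfilled_eventually: "\<exists>k\<ge>k0. fulfils m n t (fst (S k)) (snd (S k))"
proof -
  obtain k where "k \<ge> k0" "task_at k = t" using task_at_infinitely_often by blast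
  then have "Suc k \<ge> k0" "fulfils m n t (fst (S (Suc k))) (snd (S (Suc k)))"
    using search_step_stage[of k] by (simp_all only: search_step_def)
  then show ?thesis by blast
qed

lemma reduced_eventually:
  assumes "(w, \<psi>) \<in> limit_fms"
  shows "\<exists>k\<ge>k0. reduced m w \<psi> u (fst (S k)) (snd (S k))"
proof -
  obtain k1 where k1: "\<forall>k\<ge>k1. (w, \<psi>) \<in># snd (S k)" using limit_fms_eventually[OF assms] by blast
  obtain k where "k \<ge> max k0 k1" "fulfils m n (Reduce w \<psi> u) (fst (S k)) (snd (S k))"
    using fulfilled_eventually by blast
  then show ?thesis using k1 by auto
qed

lemma rtrancl_links_limit:
  assumes "(w, u) \<in> (links i limit_rels)\<^sup>*"
  shows "\<exists>k0. \<forall>k\<ge>k0. (w, u) \<in> (rel_conn i (fst (S k)))\<^sup>*"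
proof -
  have "links i limit_rels = (\<Union>k. rel_conn i (fst (S k)))"
    by (auto simp: limit_rels_def links_def rel_conn_def)
  moreover have "mono (\<lambda>k. rel_conn i (fst (S k)))"
    using stage_mono(1) by (auto simp: mono_def rel_conn_def dest: mset_subset_eqD)
  ultimately show ?thesis using rtrancl_UN_mono[of "\<lambda>k. rel_conn i (fst (S k))"] assms by simp
qed

lemma limit_hintikka: "hintikka m n limit_rels limit_fms"
proof (unfold_locales)
  fix w p assume "(w, Pos p) \<in> limit_fms"
  show "(w, Neg p) \<notin> limit_fms"
  proof
    assume "(w, Neg p) \<in> limit_fms"
    then obtain k where "(w, Pos p) \<in># snd (S k)" "(w, Neg p) \<in># snd (S k)"
      using limit_fms_eventually \<open>(w, Pos p) \<in> limit_fms\<close> by (metis nat_le_linear)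
    then show False using stage_underivable derivable_id_mem by blast
  qed
next
  fix w a b assume "(w, Conj a b) \<in> limit_fms"
  then obtain k where "reduced m w (Conj a b) 0 (fst (S k)) (snd (S k))"
    using reduced_eventually by blast
  then show "(w, a) \<in> limit_fms \<or> (w, b) \<in> limit_fms" by (auto simp: limit_fms_def)
next
  fix w a b assume "(w, Disj a b) \<in> limit_fms"
  then obtain k where "reduced m w (Disj a b) 0 (fst (S k)) (snd (S k))"
    using reduced_eventually by blast
  then show "(w, a) \<in> limit_fms \<and> (w, b) \<in> limit_fms" by (auto simp: limit_fms_def)
next
  fix w a assume "(w, Box a) \<in> limit_fms"
  then obtain k where "reduced m w (Box a) 0 (fst (S k)) (snd (S k))"
    using reduced_eventually by blast
  then show "\<exists>v. (v, a) \<in> limit_fms" by (auto simp: limit_fms_def)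
next
  fix w a u assume "(w, Dia a) \<in> limit_fms"
  then obtain k where "reduced m w (Dia a) u (fst (S k)) (snd (S k))"
    using reduced_eventually by blast
  then show "(u, a) \<in> limit_fms" by (auto simp: limit_fms_def)
next
  fix w i a assume "(w, Stit i a) \<in> limit_fms" "i \<in> {1..m}"
  moreover obtain k where "reduced m w (Stit i a) 0 (fst (S k)) (snd (S k))"
    using reduced_eventually calculation(1) by blast
  ultimately show "\<exists>v. (i, w, v) \<in> limit_rels \<and> (v, a) \<in> limit_fms"
    by (auto simp: limit_fms_def limit_rels_def)
next
  fix w i a u assume "(w, DStit i a) \<in> limit_fms" "i \<in> {1..m}" "(w, u) \<in> (links i limit_rels)\<^sup>*"
  moreover obtain k0 where "\<forall>k\<ge>k0. (w, u) \<in> (rel_conn i (fst (S k)))\<^sup>*"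
    using rtrancl_links_limit calculation(3) by blast
  moreover obtain k where "k \<ge> k0" "reduced m w (DStit i a) u (fst (S k)) (snd (S k))"
    using reduced_eventually calculation(1) by blast
  ultimately show "(u, a) \<in> limit_fms" by (auto simp: limit_fms_def)
next
  fix us :: "nat \<Rightarrow> nat"
  obtain k where "fulfils m n (Ioa (map us [0..<Suc m])) (fst (S k)) (snd (S k))"
    using fulfilled_eventually by blast
  then show "\<exists>v. \<forall>i\<in>{1..m}. (i, us i, v) \<in> limit_rels"
    by (auto simp: limit_rels_def simp del: upt_Suc)
next
  fix i ws assume "0 < n" "i \<in> {1..m}"
  moreover obtain k where "fulfils m n (Apc i (map ws [0..<Suc n])) (fst (S k)) (snd (S k))"
    using fulfilled_eventually by blast
  ultimately show "\<exists>k j. k < j \<and> j \<le> n \<and> (i, ws k, ws j) \<in> limit_rels"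
    by (fastforce simp: limit_rels_def simp del: upt_Suc)
qed

end

theorem theorem3:
  fixes m n x :: nat and \<phi> :: fm
  assumes "m \<ge> 1" and "in_lang m \<phi>" and "valid m n \<phi>"
  shows "derivable m n {#} {#(x, \<phi>)#}"
proof (rule ccontr)
  \<comment> \<open>The countermodel has every label as a world.\<close>
  assume "\<not> derivable m n {#} {#(x, \<phi>)#}"
  then interpret failed_search m n "({#}, {#(x, \<phi>)#})"
    by unfold_locales simp
  interpret hintikka m n limit_rels limit_fms
    by (rule limit_hintikka)
  have "(x, \<phi>) \<in> limit_fms"
    unfolding limit_fms_def by (rule UN_I[of 0]) simp_all
  then have "\<not> sat UNIV R V x \<phi>"
    using countermodel_falsifies assms(2) by (simp add: in_lang_def)
  moreover have "sat UNIV R V x \<phi>"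
    using assms(3) ldm_frame_countermodel by (simp add: valid_def)
  ultimately show False by contradiction
qed

end
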